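(* Let $\mathbf A$ be an integral interior $r\ell u$-groupoid and $\mathbf B$ a finite partial subalgebra of $\mathbf A$. Then the algebra $\mathbf F^+_{\mathbf A,\mathbf B}$ is finite.
   Context: An $r\ell u$-groupoid is an algebra $(A,\wedge,\vee,\cdot,\backslash,/,1)$ with $(A,\wedge,\vee)$ a lattice (order $\le$), $(A,\cdot,1)$ a unital groupoid (binary operation, not necessarily associative, with two-sided unit $1$), and $x\cdot y\le z\iff y\le x\backslash z\iff x\le z/y$. An interior $r\ell u$-groupoid has in addition a unary $!$ with $1\le !1$, $!x\cdot!y\le !(x\cdot y)$, $!x\le x$, $!x\le !!x$, $x\le y\Rightarrow !x\le !y$; integral means $x\le 1$ for all $x$. A partial subalgebra $\mathbf B$ of $\mathbf A$ is a subset $B\subseteq A$ with $f^{\mathbf B}(\vec b)=f^{\mathbf A}(\vec b)$ if this lies in $B$, undefined otherwise. Enriched frames. An enriched $ru$-frame is $\mathbf F=(G,T,N,K)$ where $(G,\cdot,\varepsilon)$ is a unital groupoid, $T$ a set, $N\subseteq G\times T$ a nuclear relation (for all $x,y\in G$, $z\in T$ there exist $x\backslash\!\!\backslash z,\ z/\!\!/y\in T$ with $x\cdot y\,N\,z\iff y\,N\,x\backslash\!\!\backslash z\iff x\,N\,z/\!\!/y$), and $K$ a sub-unital-groupoid of $G$. For $X\subseteq G$, $Y\subseteq T$: $X^{\rhd}=\{t\in T\mid \forall x\in X\,(x N t)\}$, $Y^{\lhd}=\{g\in G\mid\forall y\in Y\,(g N y)\}$, $\gamma_N(X)=X^{\rhd\lhd}$;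 $X$ is closed if $\gamma_N(X)=X$. $\mathbf F^+$ is the algebra whose universe is the set of closed sets, with $X\wedge Y=X\cap Y$, $X\vee Y=\gamma_N(X\cup Y)$, $X\cdot Y=\gamma_N(X\circ Y)$ where $X\circ Y=\{x\cdot y\mid x\in X,y\in Y\}$, $X\backslash Y=\{z\in G\mid X\circ\{z\}\subseteq Y\}$, $Y/X=\{z\in G\mid \{z\}\circ X\subseteq Y\}$, $!X=\gamma_N(X\cap K)$, unit $\gamma_N(\{\varepsilon\})$. The frame $\mathbf F_{\mathbf A,\mathbf B}=(G_B,T_B,N_B,K_B)$: $G_B$ is the sub-unital-groupoid of $(A,\cdot,1)$ generated by $B$; $U_{G_B}$ is the set of unary linear polynomials over $G_B$, i.e. maps $G_B\to G_B$ given by a groupoid term in which one variable occurs exactly once and all other leaves are elements of $G_B$ (including the identity map $\mathrm{id}$); $T_B=U_{G_B}\times B$; $x\,N_B\,(u,b)$ iff $u(x)\le^{\mathbf A}b$; $K_B$ is the sub-unital-groupoid of $(A,\cdot,1)$ generated by $\{!^{\mathbf A}b\mid b\in B,\ !^{\mathbf A}b\in B\}$. ($N_B$ is nuclear with $x\backslash\!\!\backslash(u,b)=(u(x\cdot\_),b)$ and $(u,b)/\!\!/y=(u(\_\cdot y),b)$.) *)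

theory Defs
  imports Main
begin

section \<open>r-l-u-groupoids (universe = the whole type 'a)\<close>

record 'a rlu_groupoid =
  meet :: "'a \<Rightarrow> 'a \<Rightarrow> 'a"
  join :: "'a \<Rightarrow> 'a \<Rightarrow> 'a"
  mult :: "'a \<Rightarrow> 'a \<Rightarrow> 'a"
  ldiv :: "'a \<Rightarrow> 'a \<Rightarrow> 'a"   (* ldiv x z  =  x \ z *)
  rdiv :: "'a \<Rightarrow> 'a \<Rightarrow> 'a"   (* rdiv z y  =  z / y *)
  one  :: 'a
  bang :: "'a \<Rightarrow> 'a"

definition leq :: "('a, 'b) rlu_groupoid_scheme \<Rightarrow> 'a \<Rightarrow> 'a \<Rightarrow> bool" where
  "leq A x y \<longleftrightarrow> meet A x y = x"

definition is_lattice :: "('a, 'b) rlu_groupoid_scheme \<Rightarrow> bool" where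
  "is_lattice A \<longleftrightarrow>
     (\<forall>x y z. meet A (meet A x y) z = meet A x (meet A y z)) \<and>
     (\<forall>x y z. join A (join A x y) z = join A x (join A y z)) \<and>
     (\<forall>x y. meet A x y = meet A y x) \<and>
     (\<forall>x y. join A x y = join A y x) \<and>
     (\<forall>x. meet A x x = x) \<and> (\<forall>x. join A x x = x) \<and>
     (\<forall>x y. meet A x (join A x y) = x) \<and>
     (\<forall>x y. join A x (meet A x y) = x)"

definition is_rlu_groupoid :: "('a, 'b) rlu_groupoid_scheme \<Rightarrow> bool" where
  "is_rlu_groupoid A \<longleftrightarrow>
     is_lattice A \<and>
     (\<forall>x. mult A (one A) x = x \<and> mult A x (one A) = x) \<and>
     (\<forall>x y z. (leq A (mult A x y) z \<longleftrightarrow> leq A y (ldiv A x z)) \<and>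
              (leq A (mult A x y) z \<longleftrightarrow> leq A x (rdiv A z y)))"

definition is_interior_rlu_groupoid :: "('a, 'b) rlu_groupoid_scheme \<Rightarrow> bool" where
  "is_interior_rlu_groupoid A \<longleftrightarrow>
     is_rlu_groupoid A \<and>
     leq A (one A) (bang A (one A)) \<and>
     (\<forall>x y. leq A (mult A (bang A x) (bang A y)) (bang A (mult A x y))) \<and>
     (\<forall>x. leq A (bang A x) x) \<and>
     (\<forall>x. leq A (bang A x) (bang A (bang A x))) \<and>
     (\<forall>x y. leq A x y \<longrightarrow> leq A (bang A x) (bang A y))"

definition is_integral :: "('a, 'b) rlu_groupoid_scheme \<Rightarrow> bool" where
  "is_integral A \<longleftrightarrow> (\<forall>x. leq A x (one A))"

text \<open>A partial subalgebra is determined by its underlying subset: the operations are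
  the restrictions of those of A (defined exactly when the value lies in B).\<close>
definition is_partial_subalgebra :: "('a, 'b) rlu_groupoid_scheme \<Rightarrow> 'a set \<Rightarrow> bool" where
  "is_partial_subalgebra A B \<longleftrightarrow> B \<subseteq> UNIV"

record ('g, 't) enriched_frame =
  fG :: "'g set"
  fmult :: "'g \<Rightarrow> 'g \<Rightarrow> 'g"
  feps :: 'g
  fT :: "'t set"
  fN :: "'g \<Rightarrow> 't \<Rightarrow> bool"
  fK :: "'g set"

definition rpolar :: "('g, 't) enriched_frame \<Rightarrow> 'g set \<Rightarrow> 't set" where
  "rpolar F X = {t \<in> fT F. \<forall>x\<in>X. fN F x t}"

definition lpolar :: "('g, 't) enriched_frame \<Rightarrow> 't set \<Rightarrow> 'g set" where
  "lpolar F Y = {g \<in> fG F. \<forall>y\<in>Y. fN F g y}"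

definition gammaN :: "('g, 't) enriched_frame \<Rightarrow> 'g set \<Rightarrow> 'g set" where
  "gammaN F X = lpolar F (rpolar F X)"

definition cplx :: "('g, 't) enriched_frame \<Rightarrow> 'g set \<Rightarrow> 'g set \<Rightarrow> 'g set" where
  "cplx F X Y = {fmult F x y | x y. x \<in> X \<and> y \<in> Y}"

record 'g complex_algebra =
  ca_carrier :: "'g set set"
  ca_meet :: "'g set \<Rightarrow> 'g set \<Rightarrow> 'g set"
  ca_join :: "'g set \<Rightarrow> 'g set \<Rightarrow> 'g set"
  ca_mult :: "'g set \<Rightarrow> 'g set \<Rightarrow> 'g set"
  ca_ldiv :: "'g set \<Rightarrow> 'g set \<Rightarrow> 'g set"
  ca_rdiv :: "'g set \<Rightarrow> 'g set \<Rightarrow> 'g set"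
  ca_one :: "'g set"
  ca_bang :: "'g set \<Rightarrow> 'g set"

definition Fplus :: "('g, 't) enriched_frame \<Rightarrow> 'g complex_algebra" where
  "Fplus F = \<lparr>
     ca_carrier = {X. X \<subseteq> fG F \<and> gammaN F X = X},
     ca_meet = (\<lambda>X Y. X \<inter> Y),
     ca_join = (\<lambda>X Y. gammaN F (X \<union> Y)),
     ca_mult = (\<lambda>X Y. gammaN F (cplx F X Y)),
     ca_ldiv = (\<lambda>X Y. {z \<in> fG F. cplx F X {z} \<subseteq> Y}),
     ca_rdiv = (\<lambda>Y X. {z \<in> fG F. cplx F {z} X \<subseteq> Y}),
     ca_one = gammaN F {feps F},
     ca_bang = (\<lambda>X. gammaN F (X \<inter> fK F)) \<rparr>"

inductive_set subgroupoid_gen :: "('a, 'b) rlu_groupoid_scheme \<Rightarrow> 'a set \<Rightarrow> 'a set"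
  for A :: "('a, 'b) rlu_groupoid_scheme" and S :: "'a set" where
  gen_base: "x \<in> S \<Longrightarrow> x \<in> subgroupoid_gen A S"
| gen_one: "one A \<in> subgroupoid_gen A S"
| gen_mult: "x \<in> subgroupoid_gen A S \<Longrightarrow> y \<in> subgroupoid_gen A S
      \<Longrightarrow> mult A x y \<in> subgroupoid_gen A S"

datatype 'a gterm = Var | Const 'a | Mul "'a gterm" "'a gterm"

fun var_count :: "'a gterm \<Rightarrow> nat" where
  "var_count Var = 1"
| "var_count (Const c) = 0"
| "var_count (Mul s t) = var_count s + var_count t"

fun consts_of :: "'a gterm \<Rightarrow> 'a set" where
  "consts_of Var = {}"
| "consts_of (Const c) = {c}"
| "consts_of (Mul s t) = consts_of s \<union> consts_of t"

fun geval :: "('a, 'b) rlu_groupoid_scheme \<Rightarrow> 'a gterm \<Rightarrow> 'a \<Rightarrow> 'a" where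
  "geval A Var x = x"
| "geval A (Const c) x = c"
| "geval A (Mul s t) x = mult A (geval A s x) (geval A t x)"

definition lin_polys :: "('a, 'b) rlu_groupoid_scheme \<Rightarrow> 'a set \<Rightarrow> ('a \<Rightarrow> 'a) set" where
  "lin_polys A G = {(\<lambda>x. if x \<in> G then geval A t x else undefined) | t.
                      var_count t = 1 \<and> consts_of t \<subseteq> G}"

definition frame_AB :: "('a, 'b) rlu_groupoid_scheme \<Rightarrow> 'a set
                           \<Rightarrow> ('a, ('a \<Rightarrow> 'a) \<times> 'a) enriched_frame" where
  "frame_AB A B = \<lparr>
     fG = subgroupoid_gen A B,
     fmult = mult A,
     feps = one A,
     fT = lin_polys A (subgroupoid_gen A B) \<times> B,
     fN = (\<lambda>x (u, b). leq A (u x) b),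
     fK = subgroupoid_gen A {bang A b | b. b \<in> B \<and> bang A b \<in> B} \<rparr>"

end

theory Submission
  imports Defs "HOL-Library.Ramsey"
begin

text \<open>Every closed set of \<open>F_{A,B}\<close> is an intersection of sections
  \<open>{g \<in> G_B. u g \<le> b}\<close>, and by residuation each section equals \<open>{g \<in> G_B. g \<le> a}\<close> for some
  \<open>a\<close> in the closure \<open>D\<close> of \<open>B\<close> under \<open>c\<setminus>_\<close> and \<open>_/c\<close> with \<open>c \<in> G_B\<close>. So it suffices that only
  finitely many such traces occur. In an integral structure products lie below their factors and
  divisions above their numerators; since \<open>B\<close> is finite, Nash-Williams' minimal bad sequence
  argument shows that \<open>G_B\<close> is well-quasi-ordered by \<open>\<ge>\<close> and \<open>D\<close> by \<open>\<le>\<close>. An infinite family of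
  traces would contain a strictly ascending chain, and witnesses of the strict inclusions would
  form a sequence in \<open>G_B\<close> that is bad for \<open>\<ge>\<close>.\<close>

definition good :: "('a \<Rightarrow> 'a \<Rightarrow> bool) \<Rightarrow> (nat \<Rightarrow> 'a) \<Rightarrow> bool" where
  "good Q f \<longleftrightarrow> (\<exists>i j. i < j \<and> Q (f i) (f j))"

definition almost_full_on :: "('a \<Rightarrow> 'a \<Rightarrow> bool) \<Rightarrow> 'a set \<Rightarrow> bool" where
  "almost_full_on Q D \<longleftrightarrow> (\<forall>f. (\<forall>i. f i \<in> D) \<longrightarrow> good Q f)"

definition good_subseqs :: "('a \<Rightarrow> 'a \<Rightarrow> bool) \<Rightarrow> (nat \<Rightarrow> 'a) \<Rightarrow> bool" where
  "good_subseqs Q f \<longleftrightarrow> (\<forall>\<phi>. strict_mono \<phi> \<longrightarrow> good Q (f \<circ> \<phi>))"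

lemma almost_full_on_imp_good_subseqs:
  "almost_full_on Q D \<Longrightarrow> (\<And>i. f i \<in> D) \<Longrightarrow> good_subseqs Q f"
  unfolding almost_full_on_def good_subseqs_def by simp

lemma good_subseqs_comp:
  "good_subseqs Q f \<Longrightarrow> strict_mono \<psi> \<Longrightarrow> good_subseqs Q (f \<circ> \<psi>)"
  unfolding good_subseqs_def[of Q "f \<circ> \<psi>"]
proof (intro allI impI)
  fix \<phi> :: "nat \<Rightarrow> nat"
  assume "good_subseqs Q f" "strict_mono \<psi>" "strict_mono \<phi>"
  then have "good Q (f \<circ> (\<psi> \<circ> \<phi>))"
    unfolding good_subseqs_def strict_mono_def by simp
  then show "good Q (f \<circ> \<psi> \<circ> \<phi>)" by (simp add: comp_assoc)
qed

lemma good_subseqs_imp_chain: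
  assumes "good_subseqs Q f"
  obtains \<phi> :: "nat \<Rightarrow> nat" where "strict_mono \<phi>" "\<And>i j. i < j \<Longrightarrow> Q (f (\<phi> i)) (f (\<phi> j))"
proof -
  define c where "c X = (if Q (f (Min X)) (f (Max X)) then 0 else 1::nat)" for X
  have "\<forall>x\<in>UNIV. \<forall>y\<in>UNIV. x \<noteq> y \<longrightarrow> c {x, y} < 2" by (simp add: c_def)
  from Ramsey2[OF _ this] obtain Y t where Y: "infinite Y"
    and colour: "\<forall>x\<in>Y. \<forall>y\<in>Y. x \<noteq> y \<longrightarrow> c {x, y} = t" by auto
  define \<phi> where "\<phi> = enumerate Y"
  have sm: "strict_mono \<phi>" using Y by (simp add: \<phi>_def strict_mono_enumerate)
  have colour_\<phi>: "c {\<phi> i, \<phi> j} = t" if "i < j" for i j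
    using colour enumerate_in_set[OF Y] sm that unfolding \<phi>_def by (metis less_irrefl strict_mono_def)
  have c_\<phi>: "c {\<phi> i, \<phi> j} = (if Q (f (\<phi> i)) (f (\<phi> j)) then 0 else 1)" if "i < j" for i j
    using strict_monoD[OF sm that] by (simp add: c_def min_def max_def)
  have "t = 0"
  proof (rule ccontr)
    assume "t \<noteq> 0"
    then have "\<not> good Q (f \<circ> \<phi>)"
      using colour_\<phi> c_\<phi> unfolding good_def by (metis comp_apply)
    with assms sm show False unfolding good_subseqs_def by blast
  qed
  with sm colour_\<phi> c_\<phi> show thesis by (metis that zero_neq_one)
qed

lemma constant_subseq:
  fixes g :: "nat \<Rightarrow> 'a"
  assumes "finite (range g)"
  obtains \<phi> :: "nat \<Rightarrow> nat" and v where "strict_mono \<phi>" "\<And>i. g (\<phi> i) = v"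
proof -
  obtain n where "infinite {k. g k = g n}"
    using pigeonhole_infinite[of UNIV g] assms by auto
  then show thesis
    by (intro that[of "enumerate {k. g k = g n}" "g n"])
      (auto simp: strict_mono_enumerate dest: enumerate_in_set)
qed

lemma bad_eventually_avoids:
  assumes "\<not> good Q m" "\<And>x. Q x x" "finite S"
  obtains N where "\<And>n. N \<le> n \<Longrightarrow> m n \<notin> S"
proof -
  have "inj m" using assms(1,2) unfolding good_def inj_def by (metis linorder_neqE_nat)
  then have "finite (m -` S)" using assms(3) by (simp add: finite_vimageI)
  then obtain N where "\<forall>n\<in>m -` S. n < N" using finite_nat_set_iff_bounded by blast
  then show thesis by (intro that[of N]) (auto simp: not_less[symmetric])
qed

definition bad_prefix :: "'a set \<Rightarrow> ('a \<Rightarrow> 'a \<Rightarrow> bool) \<Rightarrow> 'a list \<Rightarrow> bool" where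
  "bad_prefix D Q xs \<longleftrightarrow> (\<exists>g. (\<forall>i. g i \<in> D) \<and> \<not> good Q g \<and> (\<forall>i<length xs. g i = xs ! i))"

definition min_bad_next :: "'a set \<Rightarrow> ('a \<Rightarrow> 'a \<Rightarrow> bool) \<Rightarrow> ('a \<Rightarrow> nat) \<Rightarrow> 'a list \<Rightarrow> 'a" where
  "min_bad_next D Q sz xs =
     (SOME x. bad_prefix D Q (xs @ [x]) \<and> (\<forall>y. bad_prefix D Q (xs @ [y]) \<longrightarrow> sz x \<le> sz y))"

fun min_bad_prefix :: "'a set \<Rightarrow> ('a \<Rightarrow> 'a \<Rightarrow> bool) \<Rightarrow> ('a \<Rightarrow> nat) \<Rightarrow> nat \<Rightarrow> 'a list" where
  "min_bad_prefix D Q sz 0 = []"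
| "min_bad_prefix D Q sz (Suc n) =
     min_bad_prefix D Q sz n @ [min_bad_next D Q sz (min_bad_prefix D Q sz n)]"

definition minimal_bad :: "'a set \<Rightarrow> ('a \<Rightarrow> 'a \<Rightarrow> bool) \<Rightarrow> ('a \<Rightarrow> nat) \<Rightarrow> (nat \<Rightarrow> 'a) \<Rightarrow> bool" where
  "minimal_bad D Q sz m \<longleftrightarrow> (\<forall>i. m i \<in> D) \<and> \<not> good Q m \<and>
     (\<forall>n g. (\<forall>i. g i \<in> D) \<and> (\<forall>i<n. g i = m i) \<and> sz (g n) < sz (m n) \<longrightarrow> good Q g)"

lemma min_bad_next:
  assumes "bad_prefix D Q xs"
  shows "bad_prefix D Q (xs @ [min_bad_next D Q sz xs])"
    and "bad_prefix D Q (xs @ [y]) \<Longrightarrow> sz (min_bad_next D Q sz xs) \<le> sz y"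
proof -
  from assms obtain g where g: "\<forall>i. g i \<in> D" "\<not> good Q g" "\<forall>i<length xs. g i = xs ! i"
    unfolding bad_prefix_def by blast
  have "bad_prefix D Q (xs @ [g (length xs)])"
    unfolding bad_prefix_def using g by (intro exI[of _ g]) (auto simp: nth_append less_Suc_eq)
  then have "\<exists>x. bad_prefix D Q (xs @ [x]) \<and> (\<forall>y. bad_prefix D Q (xs @ [y]) \<longrightarrow> sz x \<le> sz y)"
    using ex_has_least_nat[of "\<lambda>x. bad_prefix D Q (xs @ [x])" _ sz] by blast
  then have "bad_prefix D Q (xs @ [min_bad_next D Q sz xs]) \<and>
      (\<forall>y. bad_prefix D Q (xs @ [y]) \<longrightarrow> sz (min_bad_next D Q sz xs) \<le> sz y)"
    unfolding min_bad_next_def by (rule someI_ex)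
  then show "bad_prefix D Q (xs @ [min_bad_next D Q sz xs])"
    and "bad_prefix D Q (xs @ [y]) \<Longrightarrow> sz (min_bad_next D Q sz xs) \<le> sz y" by blast+
qed

lemma length_min_bad_prefix [simp]: "length (min_bad_prefix D Q sz n) = n"
  by (induction n) auto

lemma nth_min_bad_prefix:
  "i < n \<Longrightarrow> min_bad_prefix D Q sz n ! i = min_bad_prefix D Q sz (Suc i) ! i"
  by (induction n) (auto simp: nth_append less_Suc_eq)

lemma minimal_bad_exists:
  assumes "\<forall>i. f i \<in> D" "\<not> good Q f"
  obtains m where "minimal_bad D Q sz m"
proof -
  let ?pre = "min_bad_prefix D Q sz"
  have bad_pre: "bad_prefix D Q (?pre n)" for n
  proof (induction n)
    case 0 then show ?case using assms unfolding bad_prefix_def by auto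
  qed (simp add: min_bad_next)
  define m where "m i = ?pre (Suc i) ! i" for i
  have pre_m: "i < n \<Longrightarrow> ?pre n ! i = m i" for i n by (simp add: m_def nth_min_bad_prefix)
  have "m i \<in> D" for i
  proof -
    obtain g where "\<forall>i. g i \<in> D" "\<forall>k<Suc i. g k = ?pre (Suc i) ! k"
      using bad_pre[of "Suc i"] unfolding bad_prefix_def by auto
    then show ?thesis by (metis lessI m_def)
  qed
  moreover have "\<not> good Q m"
  proof
    assume "good Q m"
    then obtain i j where ij: "i < j" "Q (m i) (m j)" unfolding good_def by blast
    obtain g where g: "\<not> good Q g" "\<forall>k<Suc j. g k = ?pre (Suc j) ! k"
      using bad_pre[of "Suc j"] unfolding bad_prefix_def by auto
    have "g i = m i" "g j = m j"
      using g(2) pre_m[of i "Suc j"] pre_m[of j "Suc j"] ij(1) by (simp_all del: min_bad_prefix.simps)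
    with g(1) ij show False unfolding good_def by metis
  qed
  moreover have "good Q g" if g: "\<forall>i. g i \<in> D" "\<forall>i<n. g i = m i" "sz (g n) < sz (m n)" for n g
  proof (rule ccontr)
    assume "\<not> good Q g"
    with g have "bad_prefix D Q (?pre n @ [g n])"
      unfolding bad_prefix_def
      by (intro exI[of _ g]) (auto simp: nth_append less_Suc_eq pre_m)
    then have "sz (min_bad_next D Q sz (?pre n)) \<le> sz (g n)" by (rule min_bad_next(2)[OF bad_pre])
    then show False using g(3) by (simp add: m_def nth_append)
  qed
  ultimately show thesis by (intro that) (auto simp: minimal_bad_def)
qed

lemma minimal_bad_not_related:
  "minimal_bad D Q sz m \<Longrightarrow> i < j \<Longrightarrow> \<not> Q (m i) (m j)"
  unfolding minimal_bad_def good_def by blast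

lemma minimal_bad_smaller_good_subseqs:
  assumes m: "minimal_bad D Q sz m"
    and h: "\<And>n. N \<le> n \<Longrightarrow> h n \<in> D \<and> sz (h n) < sz (m n) \<and> (\<forall>x\<in>D. Q x (h n) \<longrightarrow> Q x (m n))"
  shows "good_subseqs Q (\<lambda>n. h (N + n))"
  unfolding good_subseqs_def
proof (intro allI impI)
  fix \<phi> :: "nat \<Rightarrow> nat"
  assume sm: "strict_mono \<phi>"
  \<comment> \<open>Splicing \<open>h \<circ> \<phi>\<close> after the first \<open>n0\<close> terms of \<open>m\<close> undercuts \<open>m\<close> at \<open>n0\<close>, so the result
    is good, and its good pair can lie neither inside \<open>m\<close> nor across the seam.\<close>
  define n0 where "n0 = N + \<phi> 0"
  define g where "g i = (if i < n0 then m i else h (N + \<phi> (i - n0)))" for i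
  have mD: "m i \<in> D" for i using m unfolding minimal_bad_def by blast
  have "\<forall>i. g i \<in> D" "\<forall>i<n0. g i = m i" "sz (g n0) < sz (m n0)"
    using h mD by (auto simp: g_def n0_def)
  then have "good Q g" using m unfolding minimal_bad_def by blast
  then obtain i j where ij: "i < j" "Q (g i) (g j)" unfolding good_def by blast
  show "good Q ((\<lambda>n. h (N + n)) \<circ> \<phi>)"
  proof (cases "i < n0")
    case i: True
    have j: "\<not> j < n0"
      using ij minimal_bad_not_related[OF m] i by (auto simp: g_def)
    have "\<phi> 0 \<le> \<phi> (j - n0)" using sm by (simp add: strict_mono_less_eq)
    then have "i < N + \<phi> (j - n0)" using i by (simp add: n0_def)
    moreover have "Q (m i) (m (N + \<phi> (j - n0)))"
      using ij i j h[of "N + \<phi> (j - n0)"] mD by (simp add: g_def)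
    ultimately show ?thesis using minimal_bad_not_related[OF m] by blast
  next
    case False
    with ij show ?thesis unfolding good_def g_def
      by (intro exI[of _ "i - n0"] exI[of _ "j - n0"]) auto
  qed
qed

lemma almost_full_on_binary_decomposition:
  fixes sz :: "'a \<Rightarrow> nat"
  assumes refl: "\<And>x. Q x x" and "finite S"
    and decompose: "\<And>x. x \<in> D \<Longrightarrow> x \<notin> S \<Longrightarrow>
      \<exists>s t. x = f s t \<and> s \<in> D \<and> t \<in> D \<and> sz s < sz x \<and> sz t < sz x"
    and below_left: "\<And>y s t. Q y s \<Longrightarrow> Q y (f s t)"
    and below_right: "\<And>y s t. Q y t \<Longrightarrow> Q y (f s t)"
    and mono: "\<And>s s' t t'. Q s s' \<Longrightarrow> Q t t' \<Longrightarrow> Q (f s t) (f s' t')"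
  shows "almost_full_on Q D"
  unfolding almost_full_on_def
proof (intro allI impI, rule ccontr)
  fix g assume "\<forall>i. g i \<in> D" "\<not> good Q g"
  then obtain m where m: "minimal_bad D Q sz m" by (rule minimal_bad_exists)
  then have mD: "m n \<in> D" for n unfolding minimal_bad_def by blast
  have "\<not> good Q m" using m unfolding minimal_bad_def by blast
  then obtain N where N: "\<And>n. N \<le> n \<Longrightarrow> m n \<notin> S"
    using bad_eventually_avoids[of Q m, OF _ refl \<open>finite S\<close>] by blast
  obtain l r where lr: "\<And>x. x \<in> D \<Longrightarrow> x \<notin> S \<Longrightarrow>
      x = f (l x) (r x) \<and> l x \<in> D \<and> r x \<in> D \<and> sz (l x) < sz x \<and> sz (r x) < sz x"
    using decompose by metis
  have split: "m n = f (l (m n)) (r (m n))"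
    and parts: "l (m n) \<in> D" "r (m n) \<in> D" "sz (l (m n)) < sz (m n)" "sz (r (m n)) < sz (m n)"
    if "N \<le> n" for n
    using lr[OF mD N[OF that]] by blast+
  have "good_subseqs Q (\<lambda>n. (l \<circ> m) (N + n))"
  proof (rule minimal_bad_smaller_good_subseqs[OF m])
    fix n assume n: "N \<le> n"
    have "Q y (m n)" if "Q y (l (m n))" for y
      using below_left[OF that] split[OF n] by metis
    then show "(l \<circ> m) n \<in> D \<and> sz ((l \<circ> m) n) < sz (m n) \<and> (\<forall>y\<in>D. Q y ((l \<circ> m) n) \<longrightarrow> Q y (m n))"
      using parts[OF n] by simp
  qed
  then obtain \<phi> :: "nat \<Rightarrow> nat" where \<phi>: "strict_mono \<phi>"
    and chain: "\<And>i j. i < j \<Longrightarrow> Q (l (m (N + \<phi> i))) (l (m (N + \<phi> j)))"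
    by (rule good_subseqs_imp_chain) simp
  have "good_subseqs Q (\<lambda>n. (r \<circ> m) (N + n))"
  proof (rule minimal_bad_smaller_good_subseqs[OF m])
    fix n assume n: "N \<le> n"
    have "Q y (m n)" if "Q y (r (m n))" for y
      using below_right[OF that] split[OF n] by metis
    then show "(r \<circ> m) n \<in> D \<and> sz ((r \<circ> m) n) < sz (m n) \<and> (\<forall>y\<in>D. Q y ((r \<circ> m) n) \<longrightarrow> Q y (m n))"
      using parts[OF n] by simp
  qed
  with \<phi> obtain i j where ij: "i < j" "Q (r (m (N + \<phi> i))) (r (m (N + \<phi> j)))"
    unfolding good_subseqs_def good_def by auto
  have "Q (m (N + \<phi> i)) (m (N + \<phi> j))"
    using mono[OF chain[OF ij(1)] ij(2)] by (simp only: split[OF le_add1, symmetric])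
  moreover have "N + \<phi> i < N + \<phi> j" using strict_monoD[OF \<phi> ij(1)] by simp
  ultimately show False using minimal_bad_not_related[OF m] by blast
qed

lemma almost_full_on_unary_decomposition:
  fixes sz :: "'a \<Rightarrow> nat" and f :: "'k::finite \<Rightarrow> 'c \<Rightarrow> 'a \<Rightarrow> 'a"
  assumes refl: "\<And>x. Q x x" and "finite S"
    and labels: "almost_full_on P C"
    and decompose: "\<And>x. x \<in> D \<Longrightarrow> x \<notin> S \<Longrightarrow>
      \<exists>k c z. x = f k c z \<and> c \<in> C \<and> z \<in> D \<and> sz z < sz x"
    and below: "\<And>y k c z. Q y z \<Longrightarrow> Q y (f k c z)"
    and mono: "\<And>k c c' z z'. P c c' \<Longrightarrow> Q z z' \<Longrightarrow> Q (f k c z) (f k c' z')"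
  shows "almost_full_on Q D"
  unfolding almost_full_on_def
proof (intro allI impI, rule ccontr)
  fix g assume "\<forall>i. g i \<in> D" "\<not> good Q g"
  then obtain m where m: "minimal_bad D Q sz m" by (rule minimal_bad_exists)
  then have mD: "m n \<in> D" for n unfolding minimal_bad_def by blast
  have "\<not> good Q m" using m unfolding minimal_bad_def by blast
  then obtain N where N: "\<And>n. N \<le> n \<Longrightarrow> m n \<notin> S"
    using bad_eventually_avoids[of Q m, OF _ refl \<open>finite S\<close>] by blast
  obtain kind lab sub where kls: "\<And>x. x \<in> D \<Longrightarrow> x \<notin> S \<Longrightarrow>
      x = f (kind x) (lab x) (sub x) \<and> lab x \<in> C \<and> sub x \<in> D \<and> sz (sub x) < sz x"
    using decompose by metis
  have split: "m n = f (kind (m n)) (lab (m n)) (sub (m n))"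
    and parts: "lab (m n) \<in> C" "sub (m n) \<in> D" "sz (sub (m n)) < sz (m n)"
    if "N \<le> n" for n
    using kls[OF mD N[OF that]] by blast+
  obtain \<phi> :: "nat \<Rightarrow> nat" and k where \<phi>: "strict_mono \<phi>"
    and kind_\<phi>: "\<And>i. kind (m (N + \<phi> i)) = k"
    using constant_subseq[of "\<lambda>n. kind (m (N + n))"] by auto
  have "good_subseqs Q (\<lambda>n. (sub \<circ> m) (N + n))"
  proof (rule minimal_bad_smaller_good_subseqs[OF m])
    fix n assume n: "N \<le> n"
    have "Q y (m n)" if "Q y (sub (m n))" for y
      using below[OF that] split[OF n] by metis
    then show "(sub \<circ> m) n \<in> D \<and> sz ((sub \<circ> m) n) < sz (m n)
        \<and> (\<forall>y\<in>D. Q y ((sub \<circ> m) n) \<longrightarrow> Q y (m n))"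
      using parts[OF n] by simp
  qed
  from good_subseqs_comp[OF this \<phi>] have "good_subseqs Q (\<lambda>n. sub (m (N + \<phi> n)))"
    by (simp add: comp_def)
  then obtain \<psi> :: "nat \<Rightarrow> nat" where \<psi>: "strict_mono \<psi>"
    and chain: "\<And>i j. i < j \<Longrightarrow> Q (sub (m (N + \<phi> (\<psi> i)))) (sub (m (N + \<phi> (\<psi> j))))"
    by (rule good_subseqs_imp_chain) blast
  define idx where "idx i = N + \<phi> (\<psi> i)" for i
  have "good P (\<lambda>i. lab (m (idx i)))"
    using labels parts(1) unfolding almost_full_on_def idx_def by simp
  then obtain i j where ij: "i < j" "P (lab (m (idx i))) (lab (m (idx j)))"
    unfolding good_def by blast
  have split_idx: "m (idx i) = f k (lab (m (idx i))) (sub (m (idx i)))" for i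
    using split[OF le_add1[of N "\<phi> (\<psi> i)"]] unfolding idx_def kind_\<phi> .
  have "Q (f k (lab (m (idx i))) (sub (m (idx i)))) (f k (lab (m (idx j))) (sub (m (idx j))))"
    using mono[OF ij(2) chain[OF ij(1)]] unfolding idx_def .
  then have "Q (m (idx i)) (m (idx j))" unfolding split_idx[symmetric] .
  moreover have "idx i < idx j"
    using strict_monoD[OF \<phi> strict_monoD[OF \<psi> ij(1)]] by (simp add: idx_def)
  ultimately show False using minimal_bad_not_related[OF m] by blast
qed

lemma finite_traces_of_principal_downsets:
  assumes trans: "\<And>x y z. le x y \<Longrightarrow> le y z \<Longrightarrow> le x z"
    and up: "almost_full_on le D" and down: "almost_full_on (\<lambda>x y. le y x) G"
  shows "finite {{x \<in> G. le x a} | a. a \<in> D}"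
proof (rule ccontr)
  assume "infinite {{x \<in> G. le x a} | a. a \<in> D}"
  then obtain e :: "nat \<Rightarrow> 'a set" where e: "inj e" "range e \<subseteq> {{x \<in> G. le x a} | a. a \<in> D}"
    unfolding infinite_iff_countable_subset by blast
  then have "\<forall>n. \<exists>a. a \<in> D \<and> e n = {x \<in> G. le x a}" by blast
  then obtain a where "\<forall>n. a n \<in> D \<and> e n = {x \<in> G. le x (a n)}" by (metis choice)
  then have aD: "\<And>n. a n \<in> D" and e_a: "\<And>n. e n = {x \<in> G. le x (a n)}" by blast+
  obtain \<phi> :: "nat \<Rightarrow> nat" where \<phi>: "strict_mono \<phi>"
    and chain: "\<And>i j. i < j \<Longrightarrow> le (a (\<phi> i)) (a (\<phi> j))"
    by (rule good_subseqs_imp_chain[OF almost_full_on_imp_good_subseqs[of le D a, OF up aD]]) simp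
  define L where "L i = e (\<phi> i)" for i
  have L_mono: "L i \<subseteq> L j" if "i < j" for i j
  proof -
    have "le y (a (\<phi> j))" if "le y (a (\<phi> i))" for y
      using trans[OF that chain[OF \<open>i < j\<close>]] .
    then show ?thesis unfolding L_def e_a by blast
  qed
  have "L (Suc i) \<noteq> L i" for i
    using injD[OF e(1), of "\<phi> (Suc i)" "\<phi> i"] strict_monoD[OF \<phi>, of i "Suc i"] unfolding L_def by auto
  then have "\<forall>i. \<exists>x. x \<in> L (Suc i) - L i" using L_mono[OF lessI] by blast
  then obtain x where x: "\<And>i. x i \<in> L (Suc i) - L i" by (metis choice)
  then have xG: "\<And>i. x i \<in> G" unfolding L_def e_a by blast
  then obtain i j where ij: "i < j" "le (x j) (x i)"
    using down unfolding almost_full_on_def good_def by blast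
  have "x i \<in> L j"
    using x[of i] L_mono[of "Suc i" j] ij(1) by (cases "Suc i = j") auto
  then have "le (x i) (a (\<phi> j))" unfolding L_def e_a by blast
  with ij(2) xG[of j] have "x j \<in> L j" unfolding L_def e_a by (blast intro: trans)
  with x[of j] show False by blast
qed

lemma finite_closed_sets:
  assumes "finite Fam" and sections: "\<And>t. t \<in> fT F \<Longrightarrow> {g \<in> fG F. fN F g t} \<in> Fam"
  shows "finite (ca_carrier (Fplus F))"
proof (rule finite_subset)
  show "ca_carrier (Fplus F) \<subseteq> (\<lambda>S. fG F \<inter> \<Inter>S) ` Pow Fam"
  proof
    fix X assume "X \<in> ca_carrier (Fplus F)"
    then have "X = gammaN F X" by (simp add: Fplus_def)
    also have "\<dots> = fG F \<inter> \<Inter>((\<lambda>t. {g \<in> fG F. fN F g t}) ` rpolar F X)"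
      unfolding gammaN_def lpolar_def by auto
    finally have "X = fG F \<inter> \<Inter>((\<lambda>t. {g \<in> fG F. fN F g t}) ` rpolar F X)" .
    moreover have "(\<lambda>t. {g \<in> fG F. fN F g t}) ` rpolar F X \<in> Pow Fam"
      using sections by (auto simp: rpolar_def)
    ultimately show "X \<in> (\<lambda>S. fG F \<inter> \<Inter>S) ` Pow Fam" by (rule image_eqI)
  qed
  show "finite ((\<lambda>S. fG F \<inter> \<Inter>S) ` Pow Fam)" using \<open>finite Fam\<close> by simp
qed

locale rlu_groupoid =
  fixes A :: "('a, 'b) rlu_groupoid_scheme"
  assumes rlu: "is_rlu_groupoid A"
begin

lemma leq_refl: "leq A x x"
  using rlu unfolding is_rlu_groupoid_def is_lattice_def leq_def by blast

lemma leq_trans: "leq A x y \<Longrightarrow> leq A y z \<Longrightarrow> leq A x z"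
  using rlu unfolding is_rlu_groupoid_def is_lattice_def leq_def by metis

lemma mult_leq_ldiv_iff: "leq A (mult A x y) z \<longleftrightarrow> leq A y (ldiv A x z)"
  using rlu unfolding is_rlu_groupoid_def by blast

lemma mult_leq_rdiv_iff: "leq A (mult A x y) z \<longleftrightarrow> leq A x (rdiv A z y)"
  using rlu unfolding is_rlu_groupoid_def by blast

lemma mult_one_left: "mult A (one A) x = x" and mult_one_right: "mult A x (one A) = x"
  using rlu unfolding is_rlu_groupoid_def by auto

lemma mult_mono: "leq A x x' \<Longrightarrow> leq A y y' \<Longrightarrow> leq A (mult A x y) (mult A x' y')"
  by (meson leq_refl leq_trans mult_leq_ldiv_iff mult_leq_rdiv_iff)

lemma ldiv_mono: "leq A c' c \<Longrightarrow> leq A z z' \<Longrightarrow> leq A (ldiv A c z) (ldiv A c' z')"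
  by (meson leq_refl leq_trans mult_leq_ldiv_iff mult_mono)

lemma rdiv_mono: "leq A c' c \<Longrightarrow> leq A z z' \<Longrightarrow> leq A (rdiv A z c) (rdiv A z' c')"
  by (meson leq_refl leq_trans mult_leq_rdiv_iff mult_mono)

end

locale integral_rlu_groupoid = rlu_groupoid +
  assumes integral: "is_integral A"
begin

lemma leq_one: "leq A x (one A)"
  using integral unfolding is_integral_def by blast

lemma mult_leq_left: "leq A (mult A x y) x"
  using mult_mono[OF leq_refl leq_one, of x y] by (simp add: mult_one_right)

lemma mult_leq_right: "leq A (mult A x y) y"
  using mult_mono[OF leq_one leq_refl, of x y] by (simp add: mult_one_left)

lemma leq_ldiv: "leq A z (ldiv A c z)"
  using mult_leq_ldiv_iff mult_leq_right by blast

lemma leq_rdiv: "leq A z (rdiv A z c)"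
  using mult_leq_rdiv_iff mult_leq_left by blast

end

fun gen_level :: "('a, 'b) rlu_groupoid_scheme \<Rightarrow> 'a set \<Rightarrow> nat \<Rightarrow> 'a set" where
  "gen_level A B 0 = insert (one A) B"
| "gen_level A B (Suc n) =
     gen_level A B n \<union> {mult A x y | x y. x \<in> gen_level A B n \<and> y \<in> gen_level A B n}"

fun div_level :: "('a, 'b) rlu_groupoid_scheme \<Rightarrow> 'a set \<Rightarrow> nat \<Rightarrow> 'a set" where
  "div_level A B 0 = B"
| "div_level A B (Suc n) = div_level A B n
     \<union> {ldiv A c z | c z. c \<in> subgroupoid_gen A B \<and> z \<in> div_level A B n}
     \<union> {rdiv A z c | c z. c \<in> subgroupoid_gen A B \<and> z \<in> div_level A B n}"

definition div_closure :: "('a, 'b) rlu_groupoid_scheme \<Rightarrow> 'a set \<Rightarrow> 'a set" where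
  "div_closure A B = (\<Union>n. div_level A B n)"

definition level_rank :: "(nat \<Rightarrow> 'a set) \<Rightarrow> 'a \<Rightarrow> nat" where
  "level_rank L x = (LEAST n. x \<in> L n)"

lemma level_rank_le: "x \<in> L n \<Longrightarrow> level_rank L x \<le> n"
  unfolding level_rank_def by (rule Least_le)

lemma level_rank_cases:
  assumes "x \<in> L k"
  obtains "x \<in> L 0"
  | p where "level_rank L x = Suc p" "x \<in> L (Suc p)" "x \<notin> L p"
proof (cases "level_rank L x")
  case 0
  with assms show thesis unfolding level_rank_def by (metis LeastI that(1))
next
  case (Suc p)
  moreover from assms have "x \<in> L (level_rank L x)" unfolding level_rank_def by (rule LeastI)
  moreover have "x \<notin> L p" using level_rank_le[of x L p] Suc by auto
  ultimately show thesis by (intro that(2)) auto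
qed

lemma gen_level_mono: "m \<le> n \<Longrightarrow> gen_level A B m \<subseteq> gen_level A B n"
  by (induction n) (auto simp: le_Suc_eq)

lemma subgroupoid_gen_eq_UN_gen_level: "subgroupoid_gen A B = (\<Union>n. gen_level A B n)"
proof
  show "subgroupoid_gen A B \<subseteq> (\<Union>n. gen_level A B n)"
  proof
    fix x assume "x \<in> subgroupoid_gen A B"
    then show "x \<in> (\<Union>n. gen_level A B n)"
    proof induction
      case (gen_mult x y)
      then obtain i j where "x \<in> gen_level A B i" "y \<in> gen_level A B j" by auto
      then have "x \<in> gen_level A B (max i j)" "y \<in> gen_level A B (max i j)"
        using gen_level_mono[of i "max i j" A B] gen_level_mono[of j "max i j" A B] by auto
      then have "mult A x y \<in> gen_level A B (Suc (max i j))" by auto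
      then show ?case by blast
    qed (auto intro: exI[of _ 0])
  qed
  have "gen_level A B n \<subseteq> subgroupoid_gen A B" for n
    by (induction n) (auto intro: subgroupoid_gen.intros)
  then show "(\<Union>n. gen_level A B n) \<subseteq> subgroupoid_gen A B" by blast
qed

lemma subgroupoid_gen_decompose:
  assumes "x \<in> subgroupoid_gen A B" "x \<notin> insert (one A) B"
  shows "\<exists>s t. x = mult A s t \<and> s \<in> subgroupoid_gen A B \<and> t \<in> subgroupoid_gen A B
    \<and> level_rank (gen_level A B) s < level_rank (gen_level A B) x
    \<and> level_rank (gen_level A B) t < level_rank (gen_level A B) x"
proof -
  obtain k where "x \<in> gen_level A B k" using assms(1) unfolding subgroupoid_gen_eq_UN_gen_level by blast
  then obtain p where p: "level_rank (gen_level A B) x = Suc p"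
    "x \<in> gen_level A B (Suc p)" "x \<notin> gen_level A B p"
    using assms(2) by (cases rule: level_rank_cases) auto
  then obtain s t where "x = mult A s t" "s \<in> gen_level A B p" "t \<in> gen_level A B p" by auto
  with p(1) show ?thesis
    using level_rank_le[of s "gen_level A B" p] level_rank_le[of t "gen_level A B" p]
    by (intro exI[of _ s] exI[of _ t]) (auto simp: subgroupoid_gen_eq_UN_gen_level)
qed

lemma div_closure_decompose:
  assumes "x \<in> div_closure A B" "x \<notin> B"
  shows "\<exists>k c z. x = (if k then ldiv A c z else rdiv A z c) \<and> c \<in> subgroupoid_gen A B
    \<and> z \<in> div_closure A B \<and> level_rank (div_level A B) z < level_rank (div_level A B) x"
proof -
  obtain k where "x \<in> div_level A B k" using assms(1) unfolding div_closure_def by blast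
  then obtain p where p: "level_rank (div_level A B) x = Suc p"
    "x \<in> div_level A B (Suc p)" "x \<notin> div_level A B p"
    using assms(2) by (cases rule: level_rank_cases) auto
  have rank: "z \<in> div_closure A B \<and> level_rank (div_level A B) z < level_rank (div_level A B) x"
    if "z \<in> div_level A B p" for z
    using that level_rank_le[of z "div_level A B" p] p(1) unfolding div_closure_def by auto
  from p(2,3) consider
      (ldiv) c z where "x = ldiv A c z" "c \<in> subgroupoid_gen A B" "z \<in> div_level A B p"
    | (rdiv) c z where "x = rdiv A z c" "c \<in> subgroupoid_gen A B" "z \<in> div_level A B p"
    by auto
  then show ?thesis
  proof cases
    case (ldiv c z)
    then show ?thesis using rank[of z] by (intro exI[of _ True] exI[of _ c] exI[of _ z]) simp
  next
    case (rdiv c z)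
    then show ?thesis using rank[of z] by (intro exI[of _ False] exI[of _ c] exI[of _ z]) simp
  qed
qed
lemma div_closure_base: "B \<subseteq> div_closure A B"
  unfolding div_closure_def by (metis UNIV_I UN_I div_level.simps(1) subsetI)

lemma div_mem_div_closure:
  assumes "c \<in> subgroupoid_gen A B" "z \<in> div_closure A B"
  shows ldiv_mem_div_closure: "ldiv A c z \<in> div_closure A B"
    and rdiv_mem_div_closure: "rdiv A z c \<in> div_closure A B"
proof -
  obtain n where "z \<in> div_level A B n" using assms(2) unfolding div_closure_def by blast
  with assms(1) have "ldiv A c z \<in> div_level A B (Suc n)" "rdiv A z c \<in> div_level A B (Suc n)"
    unfolding div_level.simps(2) by blast+
  then show "ldiv A c z \<in> div_closure A B" "rdiv A z c \<in> div_closure A B"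
    unfolding div_closure_def by blast+
qed

lemma geval_ground: "var_count \<tau> = 0 \<Longrightarrow> geval A \<tau> x = geval A \<tau> y"
  by (induction \<tau>) auto

lemma geval_mem_subgroupoid_gen:
  "consts_of \<tau> \<subseteq> subgroupoid_gen A B \<Longrightarrow> x \<in> subgroupoid_gen A B
    \<Longrightarrow> geval A \<tau> x \<in> subgroupoid_gen A B"
  by (induction \<tau>) (auto intro: subgroupoid_gen.gen_mult)

context rlu_groupoid
begin

lemma linear_geval_leq_iff:
  assumes "var_count \<tau> = 1" "consts_of \<tau> \<subseteq> subgroupoid_gen A B" "b \<in> div_closure A B"
  shows "\<exists>a\<in>div_closure A B. \<forall>x\<in>subgroupoid_gen A B. leq A (geval A \<tau> x) b \<longleftrightarrow> leq A x a"
  using assms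
proof (induction \<tau> arbitrary: b)
  case Var
  then show ?case by force
next
  case (Const c)
  then show ?case by simp
next
  case (Mul s t)
  have sub_consts: "consts_of s \<subseteq> subgroupoid_gen A B" "consts_of t \<subseteq> subgroupoid_gen A B"
    using Mul.prems(2) by auto
  have one: "one A \<in> subgroupoid_gen A B" by (rule subgroupoid_gen.gen_one)
  consider "var_count s = 1" "var_count t = 0" | "var_count s = 0" "var_count t = 1"
    using Mul.prems(1) by fastforce
  then show ?case
  proof cases
    case 1
    define c where "c = geval A t (one A)"
    have c: "c \<in> subgroupoid_gen A B" "\<And>x. geval A t x = c"
      using geval_mem_subgroupoid_gen[OF sub_consts(2) one] geval_ground[OF 1(2)] by (auto simp: c_def)
    obtain a where "a \<in> div_closure A B"
      "\<forall>x\<in>subgroupoid_gen A B. leq A (geval A s x) (rdiv A b c) \<longleftrightarrow> leq A x a"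
      using Mul.IH(1)[OF 1(1) sub_consts(1) rdiv_mem_div_closure[OF c(1) Mul.prems(3)]] by blast
    then show ?thesis using c(2) mult_leq_rdiv_iff by auto
  next
    case 2
    define c where "c = geval A s (one A)"
    have c: "c \<in> subgroupoid_gen A B" "\<And>x. geval A s x = c"
      using geval_mem_subgroupoid_gen[OF sub_consts(1) one] geval_ground[OF 2(1)] by (auto simp: c_def)
    obtain a where "a \<in> div_closure A B"
      "\<forall>x\<in>subgroupoid_gen A B. leq A (geval A t x) (ldiv A c b) \<longleftrightarrow> leq A x a"
      using Mul.IH(2)[OF 2(2) sub_consts(2) ldiv_mem_div_closure[OF c(1) Mul.prems(3)]] by blast
    then show ?thesis using c(2) mult_leq_ldiv_iff by auto
  qed
qed

lemma frame_AB_section: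
  assumes "t \<in> fT (frame_AB A B)"
  shows "\<exists>a\<in>div_closure A B. {g \<in> fG (frame_AB A B). fN (frame_AB A B) g t}
    = {g \<in> subgroupoid_gen A B. leq A g a}"
proof -
  obtain u b where t: "t = (u, b)" and u: "u \<in> lin_polys A (subgroupoid_gen A B)" and "b \<in> B"
    using assms by (auto simp: frame_AB_def)
  from u obtain \<tau> where u_\<tau>: "u = (\<lambda>x. if x \<in> subgroupoid_gen A B then geval A \<tau> x else undefined)"
    and \<tau>: "var_count \<tau> = 1" "consts_of \<tau> \<subseteq> subgroupoid_gen A B"
    unfolding lin_polys_def mem_Collect_eq by (elim exE conjE)
  from \<open>b \<in> B\<close> have "b \<in> div_closure A B" by (rule subsetD[OF div_closure_base])
  then obtain a where "a \<in> div_closure A B"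
    "\<forall>x\<in>subgroupoid_gen A B. leq A (geval A \<tau> x) b \<longleftrightarrow> leq A x a"
    using linear_geval_leq_iff[OF \<tau>] by blast
  then show ?thesis unfolding t u_\<tau> by (auto simp: frame_AB_def)
qed

end

locale integral_rlu_groupoid_finite_base = integral_rlu_groupoid A
  for A :: "('a, 'b) rlu_groupoid_scheme" +
  fixes B :: "'a set"
  assumes finite_base: "finite B"
begin

lemma subgroupoid_gen_almost_full: "almost_full_on (\<lambda>x y. leq A y x) (subgroupoid_gen A B)"
proof (rule almost_full_on_binary_decomposition[where f = "mult A" and S = "insert (one A) B"])
  show "finite (insert (one A) B)" using finite_base by simp
  show "\<exists>s t. x = mult A s t \<and> s \<in> subgroupoid_gen A B \<and> t \<in> subgroupoid_gen A B
      \<and> level_rank (gen_level A B) s < level_rank (gen_level A B) x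
      \<and> level_rank (gen_level A B) t < level_rank (gen_level A B) x"
    if "x \<in> subgroupoid_gen A B" "x \<notin> insert (one A) B" for x
    using subgroupoid_gen_decompose[OF that] .
  show "leq A (mult A s t) y" if "leq A s y" for y s t
    using leq_trans[OF mult_leq_left that] .
  show "leq A (mult A s t) y" if "leq A t y" for y s t
    using leq_trans[OF mult_leq_right that] .
qed (simp_all add: leq_refl mult_mono)

lemma div_closure_almost_full: "almost_full_on (leq A) (div_closure A B)"
proof (rule almost_full_on_unary_decomposition[where f = "\<lambda>k c z. if k then ldiv A c z else rdiv A z c"
      and P = "\<lambda>x y. leq A y x" and C = "subgroupoid_gen A B" and S = B])
  show "\<exists>k c z. x = (if k then ldiv A c z else rdiv A z c) \<and> c \<in> subgroupoid_gen A B
      \<and> z \<in> div_closure A B \<and> level_rank (div_level A B) z < level_rank (div_level A B) x"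
    if "x \<in> div_closure A B" "x \<notin> B" for x
    using div_closure_decompose[OF that] .
  show "leq A y (if k then ldiv A c z else rdiv A z c)" if "leq A y z" for y k c z
    using leq_trans[OF that leq_ldiv] leq_trans[OF that leq_rdiv] by simp
qed (simp_all add: leq_refl finite_base subgroupoid_gen_almost_full ldiv_mono rdiv_mono)

end

theorem mainTheorem6:
  fixes A :: "('a, 'b) rlu_groupoid_scheme" and B :: "'a set"
  assumes "is_interior_rlu_groupoid A"
    and "is_integral A"
    and "is_partial_subalgebra A B"
    and "finite B"
  shows "finite (ca_carrier (Fplus (frame_AB A B)))"
proof -
  \<comment> \<open>Only the residuated lattice structure matters: \<open>!\<close> and \<open>K\<close> do not influence which sets are
    closed, and \<open>is_partial_subalgebra\<close> holds for every subset.\<close>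
  interpret integral_rlu_groupoid_finite_base A B
    using assms unfolding is_interior_rlu_groupoid_def by unfold_locales auto
  have "finite {{x \<in> subgroupoid_gen A B. leq A x a} | a. a \<in> div_closure A B}"
    using finite_traces_of_principal_downsets[OF leq_trans div_closure_almost_full
        subgroupoid_gen_almost_full] .
  then show ?thesis
    by (rule finite_closed_sets) (use frame_AB_section in blast)
qed

end
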